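(* Let $b_0\in C^2([0,1])$ satisfy $\frac rd b_0'+b_0\ge0$ on $D$ and $b_0'(r)\le0$ for $r\in D$, and assume that the solution $b$ of problem (P) blows up at time $T<\infty$. Then $b(0,t)\ge (T-t)^{-1}$ for all $t\in[0,T)$.
   Context: Fix $d>2$, $\Theta>0$; $\chi_d$ is the volume of the unit ball in $\mathbb R^d$, $D=(0,1)$, $D_T=D\times(0,T)$. Problem (P): $b_t=\chi_d\Theta\big(b_{rr}+\frac{d+1}{r}b_r\big)+\frac1d r b b_r+b^2$ in $D_T$, $b_r(0,t)=0$, $b(1,t)=1$, $b(r,0)=b_0(r)$; $b$ is the classical solution on its maximal existence interval $[0,T)$, and blows up at $T$ if $T<\infty$ and $\sup_{[0,1]}b(\cdot,t)\to\infty$ as $t\to T$. *)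

theory Defs
  imports "HOL-Analysis.Analysis"
begin

definition chi :: "nat \<Rightarrow> real" where
  "chi d = unit_ball_vol (real d)"

definition classical_solution_P ::
  "nat \<Rightarrow> real \<Rightarrow> (real \<Rightarrow> real) \<Rightarrow> (real \<Rightarrow> real \<Rightarrow> real) \<Rightarrow> real \<Rightarrow> bool" where
  "classical_solution_P d \<Theta> b0 b T \<longleftrightarrow>
     continuous_on ({0..1} \<times> {0..<T}) (\<lambda>(r, t). b r t) \<and>
     (\<exists>bt br brr.
        (\<forall>r\<in>{0<..<1}. \<forall>t\<in>{0<..<T}.
           ((\<lambda>s. b r s) has_real_derivative bt r t) (at t) \<and>
           ((\<lambda>x. br x t) has_real_derivative brr r t) (at r) \<and>
           bt r t = chi d * \<Theta> * (brr r t + (real d + 1) / r * br r t)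
                    + r / real d * b r t * br r t + (b r t)\<^sup>2) \<and>
        (\<forall>r\<in>{0..<1}. \<forall>t\<in>{0<..<T}.
           ((\<lambda>x. b x t) has_real_derivative br r t) (at r within {0..1})) \<and>
        continuous_on ({0<..<1} \<times> {0<..<T}) (\<lambda>(r, t). bt r t) \<and>
        continuous_on ({0<..<1} \<times> {0<..<T}) (\<lambda>(r, t). brr r t) \<and>
        continuous_on ({0..<1} \<times> {0<..<T}) (\<lambda>(r, t). br r t) \<and>
        (\<forall>t\<in>{0<..<T}. br 0 t = 0)) \<and>
     (\<forall>t\<in>{0..<T}. b 1 t = 1) \<and>
     (\<forall>r\<in>{0..1}. b r 0 = b0 r)"

definition blows_up_at :: "(real \<Rightarrow> real \<Rightarrow> real) \<Rightarrow> real \<Rightarrow> bool" where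
  "blows_up_at b T \<longleftrightarrow>
     filterlim (\<lambda>t. Sup ((\<lambda>r. b r t) ` {0..1})) at_top (at_left T)"

end

(* Three maximum-principle arguments, each run at the first time a barrier touches b, prove
   the bound.  First, b >= 1 by comparison with the constant solution 1.  Second, r -> b(r,t) is
   nonincreasing, by a two-point maximum principle for b(r2,t) - b(r1,t); this avoids
   differentiating the equation in r, which the regularity of a classical solution does not
   allow.  Third, if b(0,t0) < 1/(T - t0), then b(r,t) + eps r stays below a solution
   of z' = k z^2 (k > 1) that is still finite at T, contradicting blow-up: monotonicity gives
   b(.,t0) <= b(0,t0), the term eps r excludes a touch at the Neumann end r = 0, and b >= 1
   makes the transport term r b b_r / d nonpositive where b_r = -eps. *)

theory Submission
  imports Defs
begin

section \<open>Calculus at a first touching point\<close>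

lemma nonpos_if_le_vanishing_multiples:
  fixes x C :: real
  assumes "\<And>e. 0 < e \<Longrightarrow> e \<le> 1 \<Longrightarrow> x \<le> e * C"
  shows "x \<le> 0"
proof -
  have "((\<lambda>e. e * C) \<longlongrightarrow> 0 * C) (at_right 0)"
    by (intro tendsto_intros)
  moreover have "\<forall>\<^sub>F e in at_right 0. x \<le> e * C"
    using eventually_at_right_real[OF zero_less_one] by eventually_elim (use assms in auto)
  ultimately show ?thesis
    using tendsto_lowerbound[of "\<lambda>e. e * C" "0 * C" "at_right (0::real)" x] by simp
qed

lemma first_time_nonneg:
  fixes \<Psi> :: "'a::t2_space \<Rightarrow> real \<Rightarrow> real"
  assumes "compact K" and cont: "continuous_on (K \<times> {a..c}) (\<lambda>(x, t). \<Psi> x t)"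
    and "x \<in> K" "t \<in> {a..c}" "0 \<le> \<Psi> x t"
  obtains x1 t1 where "x1 \<in> K" "t1 \<in> {a..c}" "0 \<le> \<Psi> x1 t1"
    and "\<And>y s. y \<in> K \<Longrightarrow> s \<in> {a..<t1} \<Longrightarrow> \<Psi> y s < 0"
proof -
  define P where "P = (K \<times> {a..c}) \<inter> (\<lambda>(x, t). \<Psi> x t) -` {0..}"
  have "compact (K \<times> {a..c})"
    using \<open>compact K\<close> by (simp add: compact_Times)
  moreover from this have "closed P"
    unfolding P_def by (intro continuous_closed_preimage[OF cont compact_imp_closed closed_atLeast])
  moreover have "(K \<times> {a..c}) \<inter> P = P"
    by (auto simp: P_def)
  ultimately have "compact P"
    by (metis compact_Int_closed)
  then have "compact (snd ` P)"
    by (intro compact_continuous_image continuous_intros)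
  moreover have "t \<in> snd ` P"
    using assms(3-5) unfolding P_def by (auto intro!: image_eqI[of _ _ "(x, t)"])
  ultimately obtain t1 where "t1 \<in> snd ` P" and first: "\<And>s. s \<in> snd ` P \<Longrightarrow> t1 \<le> s"
    using compact_attains_inf[of "snd ` P"] by blast
  then obtain x1 where x1: "x1 \<in> K" "t1 \<in> {a..c}" "0 \<le> \<Psi> x1 t1"
    unfolding P_def by auto
  then show ?thesis
  proof (rule that)
    fix y s
    assume "y \<in> K" "s \<in> {a..<t1}"
    show "\<Psi> y s < 0"
    proof (rule ccontr)
      assume "\<not> \<Psi> y s < 0"
      then have "s \<in> snd ` P"
        using \<open>y \<in> K\<close> \<open>s \<in> {a..<t1}\<close> x1(2) unfolding P_def by (auto intro!: image_eqI[of _ _ "(y, s)"])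
      then show False
        using first[of s] \<open>s \<in> {a..<t1}\<close> by simp
    qed
  qed
qed

lemma negative_unless_first_zero:
  fixes \<Psi> :: "'a::t2_space \<Rightarrow> real \<Rightarrow> real"
  assumes "compact K" and cont: "continuous_on (K \<times> {a..c}) (\<lambda>(x, t). \<Psi> x t)"
    and init: "\<And>x. x \<in> K \<Longrightarrow> \<Psi> x a < 0"
    and no_first_zero: "\<And>x1 t1. x1 \<in> K \<Longrightarrow> t1 \<in> {a<..c} \<Longrightarrow> \<Psi> x1 t1 = 0 \<Longrightarrow>
        (\<And>x. x \<in> K \<Longrightarrow> \<Psi> x t1 \<le> 0) \<Longrightarrow> (\<And>t. t \<in> {a..<t1} \<Longrightarrow> \<Psi> x1 t < 0) \<Longrightarrow> False"
    and "x \<in> K" "t \<in> {a..c}"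
  shows "\<Psi> x t < 0"
proof (rule ccontr)
  assume "\<not> \<Psi> x t < 0"
  then have "0 \<le> \<Psi> x t"
    by simp
  then obtain x1 t1 where x1: "x1 \<in> K" "t1 \<in> {a..c}" "0 \<le> \<Psi> x1 t1"
    and before: "\<And>y s. y \<in> K \<Longrightarrow> s \<in> {a..<t1} \<Longrightarrow> \<Psi> y s < 0"
    by (rule first_time_nonneg[OF \<open>compact K\<close> cont assms(5,6)]) blast
  have "a < t1"
    using init[of x1] x1 by (cases "t1 = a") auto
  have at_t1: "\<Psi> y t1 \<le> 0" if "y \<in> K" for y
  proof (rule tendsto_upperbound)
    have "continuous_on {a..t1} (\<lambda>s. \<Psi> y s)"
      by (rule continuous_on_compose2[OF cont, of _ "\<lambda>s. (y, s)", simplified])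
        (use that x1 in \<open>auto intro: continuous_intros\<close>)
    then show "((\<lambda>s. \<Psi> y s) \<longlongrightarrow> \<Psi> y t1) (at_left t1)"
      using \<open>a < t1\<close> unfolding continuous_on_def at_within_Icc_at_left[OF \<open>a < t1\<close>, symmetric]
      by simp
    have "\<forall>\<^sub>F s in at_left t1. s \<in> {a<..<t1}"
      using eventually_at_left_real[OF \<open>a < t1\<close>] .
    then show "\<forall>\<^sub>F s in at_left t1. \<Psi> y s \<le> 0"
      by eventually_elim (use before[OF that] in \<open>fastforce intro: less_imp_le\<close>)
  qed (simp add: trivial_limit_at_left_real)
  have "\<Psi> x1 t1 = 0"
    using at_t1[OF x1(1)] x1(3) by simp
  then show False
    using no_first_zero[of x1 t1] x1 at_t1 before \<open>a < t1\<close> by simp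
qed

lemma DERIV_nonneg_at_right_endpoint_max:
  fixes g :: "real \<Rightarrow> real"
  assumes "(g has_real_derivative D) (at t)" and "a < t" and "\<And>s. s \<in> {a<..<t} \<Longrightarrow> g s \<le> g t"
  shows "D \<ge> 0"
proof (rule ccontr)
  assume "\<not> D \<ge> 0"
  then obtain \<delta> where "\<delta> > 0" and dec: "\<And>h. 0 < h \<Longrightarrow> h < \<delta> \<Longrightarrow> g t < g (t - h)"
    using DERIV_neg_dec_left[OF assms(1)] by force
  obtain h where "0 < h" "h < \<delta>" "h < t - a"
    using field_lbound_gt_zero[OF \<open>\<delta> > 0\<close>, of "t - a"] \<open>a < t\<close> by auto
  then show False
    using dec[of h] assms(3)[of "t - h"] by auto
qed

lemma DERIV_within_nonpos_at_left_endpoint_max: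
  fixes f :: "real \<Rightarrow> real"
  assumes "(f has_real_derivative l) (at a within S)" and "{a..c} \<subseteq> S" and "a < c"
    and "\<And>y. y \<in> {a<..<c} \<Longrightarrow> f y \<le> f a"
  shows "l \<le> 0"
proof (rule ccontr)
  assume "\<not> l \<le> 0"
  then obtain \<delta> where "\<delta> > 0" and inc: "\<And>h. 0 < h \<Longrightarrow> a + h \<in> S \<Longrightarrow> h < \<delta> \<Longrightarrow> f a < f (a + h)"
    using has_real_derivative_pos_inc_right[OF assms(1)] by force
  obtain h where "0 < h" "h < \<delta>" "h < c - a"
    using field_lbound_gt_zero[OF \<open>\<delta> > 0\<close>, of "c - a"] \<open>a < c\<close> by auto
  moreover from this have "a + h \<in> S"
    using assms(2) by auto
  ultimately show False
    using inc[of h] assms(4)[of "a + h"] by auto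
qed

lemma second_deriv_nonpos_at_interior_max:
  fixes f f' :: "real \<Rightarrow> real"
  assumes "x \<in> {a<..<c}"
    and f': "\<And>y. y \<in> {a<..<c} \<Longrightarrow> (f has_real_derivative f' y) (at y)"
    and f'': "(f' has_real_derivative f'') (at x)"
    and max: "\<And>y. y \<in> {a<..<c} \<Longrightarrow> f y \<le> f x"
  shows "f' x = 0" and "f'' \<le> 0"
proof -
  show "f' x = 0"
  proof (rule DERIV_local_max[OF f'[OF assms(1)]])
    show "0 < min (x - a) (c - x)"
      using assms(1) by auto
    show "\<forall>y. \<bar>x - y\<bar> < min (x - a) (c - x) \<longrightarrow> f y \<le> f x"
      using max by (auto simp: abs_less_iff)
  qed
  show "f'' \<le> 0"
  proof (rule ccontr)
    assume "\<not> f'' \<le> 0"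
    then obtain \<delta> where "\<delta> > 0" and inc: "\<And>h. 0 < h \<Longrightarrow> h < \<delta> \<Longrightarrow> f' x < f' (x + h)"
      using DERIV_pos_inc_right[OF f''] by force
    obtain h where h: "0 < h" "h < \<delta>" "x + h < c"
      using field_lbound_gt_zero[OF \<open>\<delta> > 0\<close>, of "c - x"] assms(1) by auto
    obtain y where y: "x < y" "y < x + h" "f (x + h) - f x = h * f' y"
      using MVT2[of x "x + h" f f'] h assms(1) f' by force
    have "f' y > 0"
      using inc[of "y - x"] y h \<open>f' x = 0\<close> by auto
    then have "h * f' y > 0"
      using \<open>0 < h\<close> by simp
    then have "f (x + h) > f x"
      using y by linarith
    then show False
      using max[of "x + h"] h assms(1) by auto
  qed
qed

lemma antimono_on_Icc_if_deriv_nonpos: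
  fixes f f' :: "real \<Rightarrow> real"
  assumes "\<And>x. x \<in> {a..c} \<Longrightarrow> (f has_real_derivative f' x) (at x within {a..c})"
    and "\<And>x. x \<in> {a<..<c} \<Longrightarrow> f' x \<le> 0"
    and "a \<le> r" "r \<le> r'" "r' \<le> c"
  shows "f r' \<le> f r"
proof (rule DERIV_nonpos_imp_decreasing_open[OF \<open>r \<le> r'\<close>])
  have "continuous_on {a..c} f"
    using assms(1) by (rule DERIV_continuous_on)
  then show "continuous_on {r..r'} f"
    by (rule continuous_on_subset) (use assms in auto)
  show "\<exists>y. (f has_real_derivative y) (at x) \<and> y \<le> 0" if "r < x" "x < r'" for x
    using assms(1)[of x] assms(2)[of x] at_within_Icc_at[of a x c] that assms(3,5) by auto
qed

section \<open>Riccati supersolutions and blow-up\<close>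

lemma riccati_supersolution:
  fixes M t0 T :: real
  assumes "0 < M" "t0 < T" "M * (T - t0) < 1"
  obtains z z' :: "real \<Rightarrow> real" and Z :: real
  where "M < z t0"
    and "\<And>s. s \<in> {t0..T} \<Longrightarrow> (z has_real_derivative z' s) (at s)"
    and "\<And>s. s \<in> {t0..T} \<Longrightarrow> (z s)\<^sup>2 < z' s"
    and "\<And>s. s \<in> {t0..T} \<Longrightarrow> z t0 \<le> z s \<and> z s \<le> Z"
proof -
  have "T - t0 < 1 / M"
    using assms by (simp add: field_simps)
  then obtain L where L: "T - t0 < L" "L < 1 / M"
    using dense by blast
  then have "1 < L / (T - t0)"
    using assms(2) by simp
  then obtain k where k: "1 < k" "k < L / (T - t0)"
    using dense by blast
  define z where "z = (\<lambda>s. 1 / (L - k * (s - t0)))"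
  have den: "0 < L - k * (T - t0)" "L - k * (T - t0) \<le> L - k * (s - t0)" "L - k * (s - t0) \<le> L"
    if "s \<in> {t0..T}" for s
    using k that assms(2) by (auto simp: field_simps intro: mult_left_mono)
  show ?thesis
  proof
    have "0 < L"
      using L(1) assms(2) by linarith
    then show "M < z t0"
      using L(2) assms(1) by (simp add: z_def field_simps)
    show "(z has_real_derivative k * (z s)\<^sup>2) (at s)" if "s \<in> {t0..T}" for s
      using den[OF that] by (auto simp: z_def power2_eq_square intro!: derivative_eq_intros)
    show "(z s)\<^sup>2 < k * (z s)\<^sup>2" if "s \<in> {t0..T}" for s
    proof -
      have "0 < (z s)\<^sup>2"
        using den[OF that] by (simp add: z_def)
      then show ?thesis
        using k(1) by simp
    qed
    show "z t0 \<le> z s \<and> z s \<le> 1 / (L - k * (T - t0))" if "s \<in> {t0..T}" for s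
      using den[OF that] den[of t0] assms(2) by (auto simp: z_def intro!: frac_le)
  qed
qed

lemma not_blows_up_at_if_bounded:
  assumes "t0 < T" and "\<And>r s. r \<in> {0..1} \<Longrightarrow> s \<in> {t0..<T} \<Longrightarrow> b r s \<le> Z"
  shows "\<not> blows_up_at b T"
proof
  assume "blows_up_at b T"
  then have "\<forall>\<^sub>F s in at_left T. Z < Sup ((\<lambda>r. b r s) ` {0..1})"
    unfolding blows_up_at_def filterlim_at_top_dense by blast
  moreover have "\<forall>\<^sub>F s in at_left T. s \<in> {t0<..<T}"
    using eventually_at_left_real[OF assms(1)] .
  ultimately have "\<forall>\<^sub>F s in at_left T. False"
  proof eventually_elim
    case (elim s)
    have "Sup ((\<lambda>r. b r s) ` {0..1}) \<le> Z"
      using assms(2) elim(2) by (intro cSUP_least) auto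
    with elim(1) show False
      by simp
  qed
  then show False
    by (simp add: trivial_limit_at_left_real)
qed

section \<open>Maximum principles for the radial problem\<close>

locale radial_solution =
  fixes c :: real and d :: nat and T :: real and b bt br brr :: "real \<Rightarrow> real \<Rightarrow> real"
  assumes diffusion_nonneg: "0 \<le> c" and dim_pos: "0 < d"
    and continuous_b: "continuous_on ({0..1} \<times> {0..<T}) (\<lambda>(r, t). b r t)"
    and has_deriv_t: "\<And>r t. r \<in> {0<..<1} \<Longrightarrow> t \<in> {0<..<T} \<Longrightarrow>
      ((\<lambda>s. b r s) has_real_derivative bt r t) (at t)"
    and has_deriv_r: "\<And>r t. r \<in> {0..<1} \<Longrightarrow> t \<in> {0<..<T} \<Longrightarrow>
      ((\<lambda>x. b x t) has_real_derivative br r t) (at r within {0..1})"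
    and has_deriv_rr: "\<And>r t. r \<in> {0<..<1} \<Longrightarrow> t \<in> {0<..<T} \<Longrightarrow>
      ((\<lambda>x. br x t) has_real_derivative brr r t) (at r)"
    and pde: "\<And>r t. r \<in> {0<..<1} \<Longrightarrow> t \<in> {0<..<T} \<Longrightarrow>
      bt r t = c * (brr r t + (real d + 1) / r * br r t) + r / real d * b r t * br r t + (b r t)\<^sup>2"
    and neumann: "\<And>t. t \<in> {0<..<T} \<Longrightarrow> br 0 t = 0"
    and dirichlet: "\<And>t. t \<in> {0..<T} \<Longrightarrow> b 1 t = 1"
    and initial_antimono: "\<And>r r'. 0 \<le> r \<Longrightarrow> r \<le> r' \<Longrightarrow> r' \<le> 1 \<Longrightarrow> b r' 0 \<le> b r 0"
begin

lemma has_deriv_r_interior: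
  "r \<in> {0<..<1} \<Longrightarrow> t \<in> {0<..<T} \<Longrightarrow> ((\<lambda>x. b x t) has_real_derivative br r t) (at r)"
  using has_deriv_r[of r t] at_within_Icc_at[of 0 r 1] by auto

lemma continuous_on_compose_b:
  assumes "continuous_on S f" "continuous_on S g"
    and "\<And>x. x \<in> S \<Longrightarrow> f x \<in> {0..1}" "\<And>x. x \<in> S \<Longrightarrow> g x \<in> {0..<T}"
  shows "continuous_on S (\<lambda>x. b (f x) (g x))"
proof -
  have "(\<lambda>x. (f x, g x)) ` S \<subseteq> {0..1} \<times> {0..<T}"
    using assms(3,4) by auto
  then show ?thesis
    using continuous_on_compose2[OF continuous_b continuous_on_Pair[OF assms(1,2)]] by simp
qed

lemma neumann_excludes_max_at_center:
  assumes "t \<in> {0<..<T}" "0 < \<mu>" "0 < e" "e \<le> 1"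
    and max: "\<And>y. y \<in> {0<..<e} \<Longrightarrow> \<sigma> * b y t + \<mu> * y \<le> \<sigma> * b 0 t"
  shows False
proof -
  have "((\<lambda>y. \<sigma> * b y t + \<mu> * y) has_real_derivative \<sigma> * br 0 t + \<mu>) (at 0 within {0..1})"
    using has_deriv_r[of 0 t] assms(1) by (auto intro!: derivative_eq_intros)
  then have "\<sigma> * br 0 t + \<mu> \<le> 0"
    by (rule DERIV_within_nonpos_at_left_endpoint_max[where c = e]) (use assms in auto)
  then show False
    using neumann assms(1,2) by simp
qed

lemma br_brr_at_interior_max:
  assumes "x \<in> {a<..<e}" "0 \<le> a" "e \<le> 1" "t \<in> {0<..<T}"
    and max: "\<And>y. y \<in> {a<..<e} \<Longrightarrow> \<sigma> * b y t + \<mu> * y \<le> \<sigma> * b x t + \<mu> * x"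
  shows "\<sigma> * br x t + \<mu> = 0" "\<sigma> * brr x t \<le> 0"
proof -
  have x: "x \<in> {0<..<1}"
    using assms(1-3) by auto
  have d1: "((\<lambda>y. \<sigma> * b y t + \<mu> * y) has_real_derivative \<sigma> * br y t + \<mu>) (at y)"
    if "y \<in> {a<..<e}" for y
    using has_deriv_r_interior[of y t] that assms(2-4) by (auto intro!: derivative_eq_intros)
  have d2: "((\<lambda>y. \<sigma> * br y t + \<mu>) has_real_derivative \<sigma> * brr x t) (at x)"
    using has_deriv_rr[OF x assms(4)] by (auto intro!: derivative_eq_intros)
  show "\<sigma> * br x t + \<mu> = 0" "\<sigma> * brr x t \<le> 0"
    using second_deriv_nonpos_at_interior_max[OF assms(1) d1 d2 max] by simp_all
qed

lemma deriv_le_bt_at_left_max: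
  assumes "x \<in> {0<..<1}" "t \<in> {0<..<T}" "a < t" and "(g has_real_derivative g') (at t)"
    and max: "\<And>s. s \<in> {a<..<t} \<Longrightarrow> \<sigma> * b x s - g s \<le> \<sigma> * b x t - g t"
  shows "g' \<le> \<sigma> * bt x t"
proof -
  have "((\<lambda>s. \<sigma> * b x s - g s) has_real_derivative \<sigma> * bt x t - g') (at t)"
    using has_deriv_t[OF assms(1,2)] assms(4) by (auto intro!: derivative_eq_intros)
  then have "0 \<le> \<sigma> * bt x t - g'"
    using DERIV_nonneg_at_right_endpoint_max assms(3) max by blast
  then show ?thesis
    by simp
qed

lemma bt_ge_where_br_nonneg:
  assumes "r \<in> {0<..<1}" "t \<in> {0<..<T}" and "br r t = \<epsilon>" "0 \<le> \<epsilon>" and "0 \<le> brr r t"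
  shows "- \<epsilon>\<^sup>2 / 4 \<le> bt r t"
proof -
  define \<beta> where "\<beta> = r / real d * \<epsilon>"
  have "0 \<le> \<beta>" "\<beta> \<le> \<epsilon>"
    using assms dim_pos mult_right_mono[of "r / real d" 1 \<epsilon>] by (auto simp: \<beta>_def divide_le_eq)
  then have "\<beta>\<^sup>2 \<le> \<epsilon>\<^sup>2"
    by (simp add: power_mono)
  moreover have "0 \<le> (b r t + \<beta> / 2)\<^sup>2"
    by simp
  moreover have "0 \<le> c * (brr r t + (real d + 1) / r * \<epsilon>)"
    using diffusion_nonneg assms by simp
  ultimately show ?thesis
    using pde[OF assms(1,2)] assms(3) by (simp add: \<beta>_def power2_eq_square algebra_simps)
qed

lemma lower_barrier_cannot_touch:
  assumes "x1 \<in> {0..1}" "t1 \<in> {0<..<T}" and "0 < \<epsilon>" "\<epsilon> \<le> 1"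
    and touch: "b x1 t1 + \<epsilon> * (2 - x1 + t1) = 1"
    and above: "\<And>x. x \<in> {0..1} \<Longrightarrow> 1 \<le> b x t1 + \<epsilon> * (2 - x + t1)"
    and before: "\<And>s. s \<in> {0<..<t1} \<Longrightarrow> 1 \<le> b x1 s + \<epsilon> * (2 - x1 + s)"
  shows False
proof -
  have max_x: "-1 * b y t1 + \<epsilon> * y \<le> -1 * b x1 t1 + \<epsilon> * x1" if "y \<in> {0..1}" for y
    using above[OF that] touch by (simp add: algebra_simps)
  consider "x1 = 1" | "x1 = 0" | "x1 \<in> {0<..<1}"
    using assms(1) by fastforce
  then show False
  proof cases
    case 1
    then show False
      using touch dirichlet[of t1] assms(2,3) by simp
  next
    case 2
    then show False
      using neumann_excludes_max_at_center[of t1 \<epsilon> 1 "-1"] max_x assms(2,3) by auto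
  next
    case 3
    then have "br x1 t1 = \<epsilon>" "0 \<le> brr x1 t1"
      using br_brr_at_interior_max[of x1 0 1 t1 "-1" \<epsilon>] max_x assms(2) by auto
    then have "- \<epsilon>\<^sup>2 / 4 \<le> bt x1 t1"
      using bt_ge_where_br_nonneg[OF 3 assms(2)] \<open>0 < \<epsilon>\<close> by simp
    moreover have "\<epsilon> \<le> -1 * bt x1 t1"
    proof (rule deriv_le_bt_at_left_max[OF 3 assms(2), of 0 "\<lambda>s. \<epsilon> * s"])
      show "((\<lambda>s. \<epsilon> * s) has_real_derivative \<epsilon>) (at t1)"
        by (auto intro!: derivative_eq_intros)
      show "-1 * b x1 s - \<epsilon> * s \<le> -1 * b x1 t1 - \<epsilon> * t1" if "s \<in> {0<..<t1}" for s
        using before[OF that] touch by (simp add: algebra_simps)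
    qed (use assms(2) in simp)
    moreover have "\<epsilon>\<^sup>2 \<le> \<epsilon>"
      using assms(3,4) by (simp add: power2_eq_square mult_left_le)
    ultimately show False
      using \<open>0 < \<epsilon>\<close> by simp
  qed
qed

lemma b_ge_1_up_to_barrier:
  assumes "r \<in> {0..1}" "t \<in> {0..<T}" and "0 < \<epsilon>" "\<epsilon> \<le> 1"
  shows "1 - b r t < \<epsilon> * (2 - r + t)"
proof -
  define \<Psi> where "\<Psi> = (\<lambda>x s. 1 - b x s - \<epsilon> * (2 - x + s))"
  have "\<Psi> r t < 0"
  proof (rule negative_unless_first_zero[of "{0..1}" 0 t \<Psi>])
    have "continuous_on ({0..1} \<times> {0..t}) (\<lambda>p. 1 - b (fst p) (snd p) - \<epsilon> * (2 - fst p + snd p))"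
      by (intro continuous_intros continuous_on_compose_b) (use assms in auto)
    then show "continuous_on ({0..1} \<times> {0..t}) (\<lambda>(x, s). \<Psi> x s)"
      by (simp add: \<Psi>_def case_prod_beta')
    show "\<Psi> x 0 < 0" if "x \<in> {0..1}" for x
    proof -
      have "1 \<le> b x 0"
        using initial_antimono[of x 1] dirichlet[of 0] that assms by auto
      moreover have "0 < \<epsilon> * (2 - x)"
        using that \<open>0 < \<epsilon>\<close> by simp
      ultimately show ?thesis
        unfolding \<Psi>_def by simp
    qed
  next
    fix x1 t1
    assume x1: "x1 \<in> {0..1}" and t1: "t1 \<in> {0<..t}" and zero: "\<Psi> x1 t1 = 0"
      and max: "\<And>x. x \<in> {0..1} \<Longrightarrow> \<Psi> x t1 \<le> 0" and before: "\<And>s. s \<in> {0..<t1} \<Longrightarrow> \<Psi> x1 s < 0"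
    show False
    proof (rule lower_barrier_cannot_touch[OF x1 _ assms(3,4)])
      show "t1 \<in> {0<..<T}"
        using t1 assms(2) by auto
      show "b x1 t1 + \<epsilon> * (2 - x1 + t1) = 1"
        using zero by (simp add: \<Psi>_def)
      show "1 \<le> b x t1 + \<epsilon> * (2 - x + t1)" if "x \<in> {0..1}" for x
        using max[OF that] by (simp add: \<Psi>_def)
      show "1 \<le> b x1 s + \<epsilon> * (2 - x1 + s)" if "s \<in> {0<..<t1}" for s
        using before[of s] that by (simp add: \<Psi>_def)
    qed
  qed (use assms in auto)
  then show ?thesis
    by (simp add: \<Psi>_def)
qed

lemma b_ge_1:
  assumes "r \<in> {0..1}" and "t \<in> {0..<T}"
  shows "1 \<le> b r t"
proof -
  have "1 - b r t \<le> 0"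
  proof (rule nonpos_if_le_vanishing_multiples[where C = "3 + t"])
    fix \<epsilon> :: real
    assume "0 < \<epsilon>" "\<epsilon> \<le> 1"
    moreover have "\<epsilon> * (2 - r + t) \<le> \<epsilon> * (3 + t)"
      using assms \<open>0 < \<epsilon>\<close> by (intro mult_left_mono) auto
    ultimately show "1 - b r t \<le> \<epsilon> * (3 + t)"
      using b_ge_1_up_to_barrier[OF assms] by (meson less_imp_le order.trans)
  qed
  then show ?thesis
    by simp
qed

lemma b_bounded_above:
  assumes "t < T"
  obtains B where "\<And>r s. r \<in> {0..1} \<Longrightarrow> s \<in> {0..t} \<Longrightarrow> b r s \<le> B"
proof -
  have "continuous_on ({0..1} \<times> {0..t}) (\<lambda>(r, s). b r s)"
    by (rule continuous_on_subset[OF continuous_b]) (use assms in auto)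
  then have "compact ((\<lambda>(r, s). b r s) ` ({0..1} \<times> {0..t}))"
    by (intro compact_continuous_image) (auto simp: compact_Times)
  then have "bdd_above ((\<lambda>(r, s). b r s) ` ({0..1} \<times> {0..t}))"
    by (simp add: bounded_imp_bdd_above compact_imp_bounded)
  then show ?thesis
    using that by (fastforce simp: bdd_above_def)
qed

lemma bt_diff_le:
  assumes "0 < r1" "r1 < r2" "r2 < 1" "t \<in> {0<..<T}"
    and "br r1 t = \<eta>" "br r2 t = \<eta>" "0 < \<eta>" "\<eta> \<le> 1"
    and "0 \<le> brr r1 t" "brr r2 t \<le> 0"
    and "\<eta> * (r2 - r1) \<le> b r2 t - b r1 t"
    and "b r1 t \<le> B" "b r2 t \<le> B"
  shows "bt r2 t - bt r1 t \<le> (1 + 3 * B) * (b r2 t - b r1 t)"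
proof -
  define D where "D = b r2 t - b r1 t"
  have r1: "r1 \<in> {0<..<1}" and r2: "r2 \<in> {0<..<1}"
    using assms by auto
  have "0 < \<eta> * (r2 - r1)"
    using assms(2,7) by simp
  then have "0 \<le> D"
    using assms(11) by (simp add: D_def)
  have "1 \<le> b r1 t"
    using b_ge_1[of r1 t] r1 assms(4) by simp
  have diffusion: "c * (brr r2 t + (real d + 1) / r2 * \<eta>) \<le> c * (brr r1 t + (real d + 1) / r1 * \<eta>)"
  proof -
    have "(real d + 1) / r2 * \<eta> \<le> (real d + 1) / r1 * \<eta>"
      using assms(1,2,7) by (intro mult_right_mono divide_left_mono) auto
    then show ?thesis
      using assms(9,10) diffusion_nonneg by (intro mult_left_mono) auto
  qed
  have advection: "r2 / real d * b r2 t * \<eta> - r1 / real d * b r1 t * \<eta> \<le> (1 + B) * D"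
  proof -
    have "\<eta> * r2 \<le> 1 * 1"
      using assms by (intro mult_mono) auto
    then have "\<eta> * r2 / real d \<le> 1"
      using dim_pos by (simp add: divide_le_eq)
    then have "(\<eta> * r2 / real d) * D \<le> D"
      using mult_right_mono[OF _ \<open>0 \<le> D\<close>] by fastforce
    moreover have "\<eta> / real d * (r2 - r1) * b r1 t \<le> \<eta> * (r2 - r1) * B"
      using assms dim_pos \<open>1 \<le> b r1 t\<close>
      by (intro mult_mono) (auto simp: divide_le_eq mult_le_cancel_right1)
    moreover have "\<eta> * (r2 - r1) * B \<le> D * B"
      using assms \<open>1 \<le> b r1 t\<close> by (intro mult_right_mono) (auto simp: D_def)
    moreover have "r2 / real d * b r2 t * \<eta> - r1 / real d * b r1 t * \<eta>
        = (\<eta> * r2 / real d) * D + \<eta> / real d * (r2 - r1) * b r1 t"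
      using dim_pos by (simp add: D_def field_simps)
    ultimately have "r2 / real d * b r2 t * \<eta> - r1 / real d * b r1 t * \<eta> \<le> D + D * B"
      by linarith
    then show ?thesis
      by (simp add: algebra_simps)
  qed
  have reaction: "(b r2 t)\<^sup>2 - (b r1 t)\<^sup>2 \<le> 2 * B * D"
  proof -
    have "(b r2 t)\<^sup>2 - (b r1 t)\<^sup>2 = D * (b r2 t + b r1 t)"
      by (simp add: D_def power2_eq_square algebra_simps)
    also have "\<dots> \<le> D * (2 * B)"
      using \<open>0 \<le> D\<close> assms(12,13) by (intro mult_left_mono) auto
    finally show ?thesis
      by (simp add: mult.commute)
  qed
  show ?thesis
    using pde[OF r1 assms(4)] pde[OF r2 assms(4)] assms(5,6) diffusion advection reaction
    by (simp add: D_def algebra_simps)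
qed

lemma two_point_barrier_no_interior_touch:
  assumes "0 < r1" "r1 < r2" "r2 < 1" "t \<in> {0<..<T}" "0 < \<eta>" "\<eta> \<le> 1" "1 \<le> B"
    and bound: "b r1 t \<le> B" "b r2 t \<le> B"
    and touch: "b r2 t - b r1 t - \<eta> * (r2 - r1) = \<eta> * exp ((3 + 6 * B) * t)"
    and below: "\<And>x y. 0 \<le> x \<Longrightarrow> x \<le> y \<Longrightarrow> y \<le> 1 \<Longrightarrow>
      b y t - b x t - \<eta> * (y - x) \<le> \<eta> * exp ((3 + 6 * B) * t)"
    and before: "\<And>s. s \<in> {0<..<t} \<Longrightarrow>
      b r2 s - b r1 s - \<eta> * (r2 - r1) \<le> \<eta> * exp ((3 + 6 * B) * s)"
  shows False
proof -
  define K where "K = 3 + 6 * B"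
  define E where "E = exp (K * t)"
  have "-1 * b y t + \<eta> * y \<le> -1 * b r1 t + \<eta> * r1" if "y \<in> {0<..<r2}" for y
    using below[of y r2] touch that assms(3) by (simp add: algebra_simps)
  then have "-1 * br r1 t + \<eta> = 0" "-1 * brr r1 t \<le> 0"
    using br_brr_at_interior_max[of r1 0 r2 t "-1" \<eta>] assms(1-4) by auto
  moreover have "1 * b y t + - \<eta> * y \<le> 1 * b r2 t + - \<eta> * r2" if "y \<in> {r1<..<1}" for y
    using below[of r1 y] touch that assms(1) by (simp add: algebra_simps)
  then have "1 * br r2 t + - \<eta> = 0" "1 * brr r2 t \<le> 0"
    using br_brr_at_interior_max[of r2 r1 1 t 1 "- \<eta>"] assms(1-4) by auto
  moreover have "\<eta> * (r2 - r1) \<le> b r2 t - b r1 t"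
    using touch assms(5) by (simp add: algebra_simps)
  ultimately have "bt r2 t - bt r1 t \<le> (1 + 3 * B) * (b r2 t - b r1 t)"
    using bt_diff_le[of r1 r2 t \<eta> B] assms(1-6) bound by simp
  also have "\<dots> \<le> (1 + 3 * B) * (2 * \<eta> * E)"
  proof -
    have "0 \<le> K * t"
      using assms(4,7) by (simp add: K_def)
    then have "r2 - r1 \<le> E"
      using assms(1,3) one_le_exp_iff[of "K * t"] unfolding E_def by linarith
    then have "\<eta> * (r2 - r1) \<le> \<eta> * E"
      using assms(5) by simp
    then show ?thesis
      using touch assms(7) by (intro mult_left_mono) (auto simp: E_def K_def)
  qed
  also have "\<dots> < \<eta> * (K * E)"
  proof -
    have "\<eta> * (K * E) = (1 + 3 * B) * (2 * \<eta> * E) + \<eta> * E"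
      by (simp add: K_def algebra_simps)
    moreover have "0 < \<eta> * E"
      using assms(5) by (simp add: E_def)
    ultimately show ?thesis
      by linarith
  qed
  also have "\<eta> * (K * E) \<le> bt r2 t - bt r1 t"
  proof -
    have "((\<lambda>s. b r2 s - b r1 s - \<eta> * (r2 - r1) - \<eta> * exp (K * s)) has_real_derivative
        bt r2 t - bt r1 t - \<eta> * (K * E)) (at t)"
      using has_deriv_t[of r1 t] has_deriv_t[of r2 t] assms(1-4)
      by (auto simp: E_def intro!: derivative_eq_intros)
    then have "0 \<le> bt r2 t - bt r1 t - \<eta> * (K * E)"
    proof (rule DERIV_nonneg_at_right_endpoint_max[where a = 0])
      show "b r2 s - b r1 s - \<eta> * (r2 - r1) - \<eta> * exp (K * s)
          \<le> b r2 t - b r1 t - \<eta> * (r2 - r1) - \<eta> * exp (K * t)" if "s \<in> {0<..<t}" for s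
        using before[OF that] touch by (simp add: K_def)
    qed (use assms(4) in simp)
    then show ?thesis
      by simp
  qed
  finally show False
    by simp
qed

lemma two_point_barrier_cannot_touch:
  assumes "0 \<le> r1" "r1 < r2" "r2 \<le> 1" "t \<in> {0<..<T}" "0 < \<eta>" "\<eta> \<le> 1" "1 \<le> B"
    and bound: "\<And>x. x \<in> {0..1} \<Longrightarrow> b x t \<le> B"
    and touch: "b r2 t - b r1 t - \<eta> * (r2 - r1) = \<eta> * exp ((3 + 6 * B) * t)"
    and below: "\<And>x y. 0 \<le> x \<Longrightarrow> x \<le> y \<Longrightarrow> y \<le> 1 \<Longrightarrow>
      b y t - b x t - \<eta> * (y - x) \<le> \<eta> * exp ((3 + 6 * B) * t)"
    and before: "\<And>s. s \<in> {0<..<t} \<Longrightarrow>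
      b r2 s - b r1 s - \<eta> * (r2 - r1) \<le> \<eta> * exp ((3 + 6 * B) * s)"
  shows False
proof -
  consider "r2 = 1" | "r1 = 0" "r2 < 1" | "0 < r1" "r2 < 1"
    using assms(1,3) by fastforce
  then show False
  proof cases
    case 1
    have "1 \<le> b r1 t" "b r2 t = 1"
      using b_ge_1[of r1 t] dirichlet[of t] assms(1,2,4) 1 by auto
    moreover have "0 \<le> \<eta> * (r2 - r1)" "0 < \<eta> * exp ((3 + 6 * B) * t)"
      using assms(2,5) by simp_all
    ultimately show False
      using touch by simp
  next
    case 2
    have "-1 * b y t + \<eta> * y \<le> -1 * b 0 t" if "y \<in> {0<..<r2}" for y
      using below[of y r2] touch that 2 by (simp add: algebra_simps)
    then show False
      using neumann_excludes_max_at_center[of t \<eta> r2 "-1"] assms(2,4,5) 2 by auto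
  next
    case 3
    show False
      using two_point_barrier_no_interior_touch[OF 3(1) assms(2) 3(2) assms(4-7)] bound assms(1-3)
        touch below before by auto
  qed
qed

lemma b_antimono_up_to_barrier:
  assumes "t \<in> {0..<T}" "0 \<le> r" "r \<le> r'" "r' \<le> 1"
    and bound: "\<And>x s. x \<in> {0..1} \<Longrightarrow> s \<in> {0..t} \<Longrightarrow> b x s \<le> B"
    and "0 < \<eta>" "\<eta> \<le> 1"
  shows "b r' t - b r t < \<eta> * (r' - r) + \<eta> * exp ((3 + 6 * B) * t)"
proof -
  define Q where "Q = {p :: real \<times> real. 0 \<le> fst p \<and> fst p \<le> snd p \<and> snd p \<le> 1}"
  \<comment> \<open>The rate 3 + 6B exceeds twice the constant 1 + 3B of \<open>bt_diff_le\<close>.\<close>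
  define \<Psi> where "\<Psi> = (\<lambda>p s. b (snd p) s - b (fst p) s - \<eta> * (snd p - fst p) - \<eta> * exp ((3 + 6 * B) * s))"
  have "1 \<le> B"
    using bound[of 0 0] b_ge_1[of 0 0] assms(1) by auto
  have "\<Psi> (r, r') t < 0"
  proof (rule negative_unless_first_zero[of Q 0 t \<Psi>])
    have "compact (({0..1} \<times> {0..1}) \<inter> {p :: real \<times> real. fst p \<le> snd p})"
      by (intro compact_Int_closed compact_Times compact_Icc closed_Collect_le continuous_on_fst
          continuous_on_snd continuous_on_id)
    moreover have "({0..1} \<times> {0..1}) \<inter> {p. fst p \<le> snd p} = Q"
      by (auto simp: Q_def)
    ultimately show "compact Q"
      by simp
    have "continuous_on (Q \<times> {0..t}) (\<lambda>q. b (snd (fst q)) (snd q) - b (fst (fst q)) (snd q)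
        - \<eta> * (snd (fst q) - fst (fst q)) - \<eta> * exp ((3 + 6 * B) * snd q))"
      by (intro continuous_intros continuous_on_compose_b) (use assms(1) in \<open>auto simp: Q_def\<close>)
    then show "continuous_on (Q \<times> {0..t}) (\<lambda>(p, s). \<Psi> p s)"
      by (simp add: \<Psi>_def case_prod_beta')
    show "\<Psi> p 0 < 0" if "p \<in> Q" for p
    proof -
      have "b (snd p) 0 \<le> b (fst p) 0" "0 \<le> \<eta> * (snd p - fst p)"
        using initial_antimono[of "fst p" "snd p"] that \<open>0 < \<eta>\<close> by (auto simp: Q_def)
      then show ?thesis
        using \<open>0 < \<eta>\<close> by (simp add: \<Psi>_def)
    qed
  next
    fix p t1
    assume p: "p \<in> Q" and t1: "t1 \<in> {0<..t}" and zero: "\<Psi> p t1 = 0"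
      and max: "\<And>q. q \<in> Q \<Longrightarrow> \<Psi> q t1 \<le> 0" and before: "\<And>s. s \<in> {0..<t1} \<Longrightarrow> \<Psi> p s < 0"
    obtain r1 r2 where p_eq: "p = (r1, r2)"
      by fastforce
    have "r1 \<noteq> r2"
      using zero \<open>0 < \<eta>\<close> by (auto simp: \<Psi>_def p_eq)
    show False
    proof (rule two_point_barrier_cannot_touch[of r1 r2 t1 \<eta> B])
      show "0 \<le> r1" "r1 < r2" "r2 \<le> 1"
        using p \<open>r1 \<noteq> r2\<close> by (auto simp: p_eq Q_def)
      show "t1 \<in> {0<..<T}"
        using t1 assms(1) by auto
      show "b x t1 \<le> B" if "x \<in> {0..1}" for x
        using t1 bound[OF that] by auto
      show "b r2 t1 - b r1 t1 - \<eta> * (r2 - r1) = \<eta> * exp ((3 + 6 * B) * t1)"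
        using zero by (simp add: \<Psi>_def p_eq)
      show "b y t1 - b x t1 - \<eta> * (y - x) \<le> \<eta> * exp ((3 + 6 * B) * t1)"
        if "0 \<le> x" "x \<le> y" "y \<le> 1" for x y
        using max[of "(x, y)"] that by (simp add: Q_def \<Psi>_def)
      show "b r2 s - b r1 s - \<eta> * (r2 - r1) \<le> \<eta> * exp ((3 + 6 * B) * s)" if "s \<in> {0<..<t1}" for s
        using before[of s] that by (simp add: \<Psi>_def p_eq)
    qed (use assms \<open>1 \<le> B\<close> in auto)
  qed (use assms in \<open>auto simp: Q_def\<close>)
  then show ?thesis
    by (simp add: \<Psi>_def)
qed

lemma b_antimono:
  assumes "t \<in> {0..<T}" "0 \<le> r" "r \<le> r'" "r' \<le> 1"
  shows "b r' t \<le> b r t"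
proof -
  obtain B where bound: "\<And>x s. x \<in> {0..1} \<Longrightarrow> s \<in> {0..t} \<Longrightarrow> b x s \<le> B"
    using b_bounded_above[of t] assms(1) by auto
  have "b r' t - b r t \<le> 0"
  proof (rule nonpos_if_le_vanishing_multiples[where C = "1 + exp ((3 + 6 * B) * t)"])
    fix \<eta> :: real
    assume "0 < \<eta>" "\<eta> \<le> 1"
    moreover have "\<eta> * (r' - r) \<le> \<eta> * 1"
      using assms \<open>0 < \<eta>\<close> by (intro mult_left_mono) auto
    moreover note b_antimono_up_to_barrier[OF assms bound \<open>0 < \<eta>\<close> \<open>\<eta> \<le> 1\<close>]
    ultimately show "b r' t - b r t \<le> \<eta> * (1 + exp ((3 + 6 * B) * t))"
      by (simp add: algebra_simps)
  qed
  then show ?thesis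
    by simp
qed

lemma bt_le_sq_where_br_nonpos:
  assumes "r \<in> {0<..<1}" "t \<in> {0<..<T}" and "br r t \<le> 0" "brr r t \<le> 0"
  shows "bt r t \<le> (b r t)\<^sup>2"
proof -
  have "(real d + 1) / r * br r t \<le> 0"
    using assms by (intro mult_nonneg_nonpos) auto
  then have "c * (brr r t + (real d + 1) / r * br r t) \<le> 0"
    using assms diffusion_nonneg by (intro mult_nonneg_nonpos) auto
  moreover have "r / real d * b r t * br r t \<le> 0"
    using assms b_ge_1[of r t] by (intro mult_nonneg_nonpos) auto
  ultimately show ?thesis
    using pde[OF assms(1,2)] by simp
qed

lemma supersolution_cannot_touch:
  assumes "x1 \<in> {0..1}" "t1 \<in> {0<..<T}" "t0 < t1" "0 < \<epsilon>"
    and z: "(z has_real_derivative z') (at t1)" and super: "(z t1)\<^sup>2 < z'"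
    and above_boundary: "1 + \<epsilon> < z t1"
    and touch: "b x1 t1 + \<epsilon> * x1 = z t1"
    and below: "\<And>x. x \<in> {0..1} \<Longrightarrow> b x t1 + \<epsilon> * x \<le> z t1"
    and before: "\<And>s. s \<in> {t0<..<t1} \<Longrightarrow> b x1 s + \<epsilon> * x1 \<le> z s"
  shows False
proof -
  have max_x: "1 * b y t1 + \<epsilon> * y \<le> 1 * b x1 t1 + \<epsilon> * x1" if "y \<in> {0..1}" for y
    using below[OF that] touch by simp
  consider "x1 = 1" | "x1 = 0" | "x1 \<in> {0<..<1}"
    using assms(1) by fastforce
  then show False
  proof cases
    case 1
    then show False
      using touch dirichlet[of t1] assms(2) above_boundary by simp
  next
    case 2
    then show False
      using neumann_excludes_max_at_center[of t1 \<epsilon> 1 1] max_x assms(2,4) by auto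
  next
    case 3
    then have "br x1 t1 = - \<epsilon>" "brr x1 t1 \<le> 0"
      using br_brr_at_interior_max[of x1 0 1 t1 1 \<epsilon>] max_x assms(2) by auto
    then have "bt x1 t1 \<le> (b x1 t1)\<^sup>2"
      using bt_le_sq_where_br_nonpos[OF 3 assms(2)] \<open>0 < \<epsilon>\<close> by simp
    also have "\<dots> \<le> (z t1)\<^sup>2"
    proof (rule power_mono)
      have "0 \<le> \<epsilon> * x1"
        using 3 \<open>0 < \<epsilon>\<close> by simp
      then show "b x1 t1 \<le> z t1"
        using touch by simp
      show "0 \<le> b x1 t1"
        using b_ge_1[of x1 t1] 3 assms(2) by simp
    qed
    also have "\<dots> < z'"
      by (rule super)
    also have "z' \<le> 1 * bt x1 t1"
    proof (rule deriv_le_bt_at_left_max[OF 3 assms(2,3) z])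
      show "1 * b x1 s - z s \<le> 1 * b x1 t1 - z t1" if "s \<in> {t0<..<t1}" for s
        using before[OF that] touch by simp
    qed
    finally show False
      by simp
  qed
qed

lemma b_below_supersolution:
  assumes "t0 \<in> {0..<T}" "t \<in> {t0..<T}" "r \<in> {0..1}" and "0 < \<epsilon>"
    and z: "\<And>s. s \<in> {t0..t} \<Longrightarrow> (z has_real_derivative z' s) (at s)"
    and super: "\<And>s. s \<in> {t0..t} \<Longrightarrow> (z s)\<^sup>2 < z' s"
    and above_boundary: "\<And>s. s \<in> {t0..t} \<Longrightarrow> 1 + \<epsilon> < z s"
    and initial: "\<And>x. x \<in> {0..1} \<Longrightarrow> b x t0 + \<epsilon> * x < z t0"
  shows "b r t + \<epsilon> * r < z t"
proof -
  define \<Psi> where "\<Psi> = (\<lambda>x s. b x s + \<epsilon> * x - z s)"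
  have "\<Psi> r t < 0"
  proof (rule negative_unless_first_zero[of "{0..1}" t0 t \<Psi>])
    have "continuous_on {t0..t} z"
      using z by (intro DERIV_continuous_on) (auto intro: has_field_derivative_at_within)
    then have "continuous_on ({0..1} \<times> {t0..t}) (\<lambda>p. z (snd p))"
      by (rule continuous_on_compose2[OF _ continuous_on_snd[OF continuous_on_id]]) auto
    then have "continuous_on ({0..1} \<times> {t0..t}) (\<lambda>p. b (fst p) (snd p) + \<epsilon> * fst p - z (snd p))"
      by (intro continuous_intros continuous_on_compose_b) (use assms(1,2) in auto)
    then show "continuous_on ({0..1} \<times> {t0..t}) (\<lambda>(x, s). \<Psi> x s)"
      by (simp add: \<Psi>_def case_prod_beta')
    show "\<Psi> x t0 < 0" if "x \<in> {0..1}" for x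
      using initial[OF that] by (simp add: \<Psi>_def)
  next
    fix x1 t1
    assume x1: "x1 \<in> {0..1}" and t1: "t1 \<in> {t0<..t}" and zero: "\<Psi> x1 t1 = 0"
      and max: "\<And>x. x \<in> {0..1} \<Longrightarrow> \<Psi> x t1 \<le> 0" and before: "\<And>s. s \<in> {t0..<t1} \<Longrightarrow> \<Psi> x1 s < 0"
    have t1t: "t1 \<in> {t0..t}"
      using t1 by auto
    show False
    proof (rule supersolution_cannot_touch[OF x1 _ _ \<open>0 < \<epsilon>\<close> z[OF t1t] super[OF t1t] above_boundary[OF t1t]])
      show "t1 \<in> {0<..<T}" "t0 < t1"
        using t1 assms(1,2) by auto
      show "b x1 t1 + \<epsilon> * x1 = z t1"
        using zero by (simp add: \<Psi>_def)
      show "b x t1 + \<epsilon> * x \<le> z t1" if "x \<in> {0..1}" for x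
        using max[OF that] by (simp add: \<Psi>_def)
      show "b x1 s + \<epsilon> * x1 \<le> z s" if "s \<in> {t0<..<t1}" for s
        using before[of s] that by (simp add: \<Psi>_def)
    qed
  qed (use assms in auto)
  then show ?thesis
    by (simp add: \<Psi>_def)
qed

lemma b_bounded_if_center_below:
  assumes "t0 \<in> {0..<T}" and "b 0 t0 < 1 / (T - t0)"
  obtains Z where "\<And>r s. r \<in> {0..1} \<Longrightarrow> s \<in> {t0..<T} \<Longrightarrow> b r s \<le> Z"
proof -
  define M where "M = b 0 t0"
  have "1 \<le> M"
    using b_ge_1[of 0 t0] assms(1) by (simp add: M_def)
  moreover have "M * (T - t0) < 1"
    using assms by (simp add: M_def field_simps)
  ultimately obtain z z' Z where "M < z t0"
    and z: "\<And>s. s \<in> {t0..T} \<Longrightarrow> (z has_real_derivative z' s) (at s)"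
    and super: "\<And>s. s \<in> {t0..T} \<Longrightarrow> (z s)\<^sup>2 < z' s"
    and z_bounds: "\<And>s. s \<in> {t0..T} \<Longrightarrow> z t0 \<le> z s \<and> z s \<le> Z"
    using riccati_supersolution[of M t0 T] assms(1) by auto
  define \<epsilon> where "\<epsilon> = (z t0 - M) / 2"
  have "0 < \<epsilon>" and z_t0: "z t0 = M + 2 * \<epsilon>"
    using \<open>M < z t0\<close> by (simp_all add: \<epsilon>_def field_simps)
  have "b r s + \<epsilon> * r < z s" if "r \<in> {0..1}" "s \<in> {t0..<T}" for r s
  proof (rule b_below_supersolution[OF assms(1) that(2,1) \<open>0 < \<epsilon>\<close>])
    show "(z has_real_derivative z' u) (at u)" "(z u)\<^sup>2 < z' u" if "u \<in> {t0..s}" for u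
      using z[of u] super[of u] that \<open>s \<in> {t0..<T}\<close> by auto
    show "1 + \<epsilon> < z u" if "u \<in> {t0..s}" for u
    proof -
      have "z t0 \<le> z u"
        using z_bounds[of u] that \<open>s \<in> {t0..<T}\<close> by auto
      then show ?thesis
        using \<open>1 \<le> M\<close> \<open>0 < \<epsilon>\<close> z_t0 by linarith
    qed
    show "b x t0 + \<epsilon> * x < z t0" if "x \<in> {0..1}" for x
    proof -
      have "b x t0 \<le> M"
        using b_antimono[of t0 0 x] assms(1) that by (simp add: M_def)
      moreover have "\<epsilon> * x \<le> \<epsilon>"
        using that \<open>0 < \<epsilon>\<close> by (simp add: mult_left_le)
      ultimately show ?thesis
        using \<open>0 < \<epsilon>\<close> z_t0 by linarith
    qed
  qed
  moreover have "0 \<le> \<epsilon> * r" if "r \<in> {0..1}" for r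
    using that \<open>0 < \<epsilon>\<close> by simp
  ultimately show ?thesis
    using that[of Z] z_bounds by fastforce
qed

lemma b_center_ge_inverse_remaining_time:
  assumes "blows_up_at b T" and "t \<in> {0..<T}"
  shows "1 / (T - t) \<le> b 0 t"
proof (rule ccontr)
  assume "\<not> 1 / (T - t) \<le> b 0 t"
  then obtain Z where "\<And>r s. r \<in> {0..1} \<Longrightarrow> s \<in> {t..<T} \<Longrightarrow> b r s \<le> Z"
    using b_bounded_if_center_below[OF assms(2)] by force
  then show False
    using not_blows_up_at_if_bounded[of t T b Z] assms by auto
qed

end

lemma radial_solution_if_classical_solution_P:
  assumes "classical_solution_P d \<Theta> b0 b T" and "0 < \<Theta>" "0 < d"
    and "\<And>r r'. 0 \<le> r \<Longrightarrow> r \<le> r' \<Longrightarrow> r' \<le> 1 \<Longrightarrow> b0 r' \<le> b0 r"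
  obtains bt br brr where "radial_solution (chi d * \<Theta>) d T b bt br brr"
proof -
  note sol = assms(1)[unfolded classical_solution_P_def]
  obtain bt br brr where
    interior: "\<forall>r\<in>{0<..<1}. \<forall>t\<in>{0<..<T}.
      ((\<lambda>s. b r s) has_real_derivative bt r t) (at t) \<and>
      ((\<lambda>x. br x t) has_real_derivative brr r t) (at r) \<and>
      bt r t = chi d * \<Theta> * (brr r t + (real d + 1) / r * br r t)
        + r / real d * b r t * br r t + (b r t)\<^sup>2"
    and deriv_r: "\<forall>r\<in>{0..<1}. \<forall>t\<in>{0<..<T}.
      ((\<lambda>x. b x t) has_real_derivative br r t) (at r within {0..1})"
    and neumann: "\<forall>t\<in>{0<..<T}. br 0 t = 0"
    using sol by blast
  have "radial_solution (chi d * \<Theta>) d T b bt br brr"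
  proof
    show "0 \<le> chi d * \<Theta>"
      using \<open>0 < \<Theta>\<close> by (simp add: chi_def)
    show "continuous_on ({0..1} \<times> {0..<T}) (\<lambda>(r, t). b r t)"
      using sol by blast
    show "b r' 0 \<le> b r 0" if "0 \<le> r" "r \<le> r'" "r' \<le> 1" for r r'
      using sol assms(4)[OF that] that by simp
    show "b 1 t = 1" if "t \<in> {0..<T}" for t
      using sol that by blast
    show "((\<lambda>s. b r s) has_real_derivative bt r t) (at t)"
      and "((\<lambda>x. br x t) has_real_derivative brr r t) (at r)"
      and "bt r t = chi d * \<Theta> * (brr r t + (real d + 1) / r * br r t)
        + r / real d * b r t * br r t + (b r t)\<^sup>2"
      if "r \<in> {0<..<1}" "t \<in> {0<..<T}" for r t
      using interior that by blast+
  qed (use assms(3) deriv_r neumann in auto)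
  then show ?thesis
    by (rule that)
qed

theorem lemma4p3:
  fixes d :: nat and \<Theta> T :: real
    and b0 b0' b0'' :: "real \<Rightarrow> real" and b :: "real \<Rightarrow> real \<Rightarrow> real"
  assumes "d > 2" and "\<Theta> > 0"
    and "\<And>r. r \<in> {0..1} \<Longrightarrow> (b0 has_real_derivative b0' r) (at r within {0..1})"
    and "\<And>r. r \<in> {0..1} \<Longrightarrow> (b0' has_real_derivative b0'' r) (at r within {0..1})"
    and "continuous_on {0..1} b0''"
    and "\<And>r. r \<in> {0<..<1} \<Longrightarrow> r / real d * b0' r + b0 r \<ge> 0"
    and "\<And>r. r \<in> {0<..<1} \<Longrightarrow> b0' r \<le> 0"
    and "0 < T"
    and "classical_solution_P d \<Theta> b0 b T"
    and "blows_up_at b T"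
  shows "\<forall>t\<in>{0..<T}. b 0 t \<ge> 1 / (T - t)"
proof -
  have b0_antimono: "b0 r' \<le> b0 r" if "0 \<le> r" "r \<le> r'" "r' \<le> 1" for r r'
    using antimono_on_Icc_if_deriv_nonpos[OF assms(3,7) that] .
  have "0 < d"
    using assms(1) by simp
  then obtain bt br brr where "radial_solution (chi d * \<Theta>) d T b bt br brr"
    using radial_solution_if_classical_solution_P[OF assms(9,2) _ b0_antimono] by blast
  then show ?thesis
    using radial_solution.b_center_ge_inverse_remaining_time[OF _ assms(10)] by blast
qed

end
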